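(* Let $\mathcal{AF}_{\vdash}=(\vdash,\overline{\cdot},\widehat{\cdot})$ be a pointed setting. Then $\mathcal{AF}_{\vdash}$ satisfies Cumulativity and Extensional Cumulativity for grounded semantics: for all $\mathcal{S}\cup\{\phi,\psi\}\subseteq\mathcal{L}$ with $\mathcal{S}\mathrel{\mid\!\sim}_{\mathsf{Grd}}\phi$, (i) $\mathcal{S}\mathrel{\mid\!\sim}^{+\phi}_{\mathsf{Grd}}\psi$ iff $\mathcal{S}\mathrel{\mid\!\sim}_{\mathsf{Grd}}\psi$, and (ii) $\mathsf{Grd}(\mathcal{AF}_{\vdash}(\mathcal{S}))=\mathsf{Grd}(\mathcal{AF}_{\vdash^{+\phi}}(\mathcal{S}))\cap\mathit{Arg}_{\vdash}(\mathcal{S})$.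
   Context: $\mathcal{L}$ is a set of formulas, $\wp_{\sf fin}(X)$ the finite subsets of $X$. A setting is $(\vdash,\overline{\cdot},\widehat{\cdot})$ with ${\vdash}\subseteq\wp_{\sf fin}(\mathcal{L})\times\mathcal{L}$ arbitrary, $\overline{\cdot}:\mathcal{L}\to\wp(\mathcal{L})$, $\widehat{\cdot}$ assigning to each nonempty finite set of formulas a finite set of formulas, with $\widehat{\emptyset}=\emptyset$. $\mathit{Arg}_{\vdash}(\mathcal{S})=\{(\Gamma,\gamma):\Gamma\subseteq\mathcal{S}\text{ finite},\Gamma\vdash\gamma\}$; in $\mathcal{AF}_{\vdash}(\mathcal{S})$, $(\Gamma,\gamma)$ attacks $(\Gamma',\gamma')$ iff $\gamma\in\overline{\phi}$ for some $\phi\in\widehat{\Gamma'}$. A set of arguments is complete iff it is conflict-free, defends each member (every attacker of a member is attacked by a member) and contains every argument it defends; $\mathsf{Grd}(\mathcal{AF}_{\vdash}(\mathcal{S}))$ is the $\subseteq$-minimal complete set. $\mathcal{S}\mathrel{\mid\!\sim}_{\mathsf{Grd}}\phi$ iff the grounded extension of $\mathcal{AF}_{\vdash}(\mathcal{S})$ contains an argument with conclusion $\phi$. For $\phi\in\mathcal{L}$, $\vdash^{+\phi}$ is the transitive closure of ${\vdash}\cup\{(\emptyset,\phi)\}$, and $\mathrel{\mid\!\sim}^{+\phi}_{\mathsf{Grd}}$ is the grounded consequence relation of the setting $(\vdash^{+\phi},\overline{\cdot},\widehat{\cdot})$. The setting is pointed iff (1) $\widehat{\Gamma\cup\Delta}=\widehat{\Gamma}\cup\widehat{\Delta}$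 for all finite $\Gamma,\Delta$, and (2) $\vdash$ satisfies Cut: for every $\phi\in\mathcal{L}$ and all finite $\Gamma,\Delta$ and $\gamma$, if $\Gamma\vdash\phi$ and $\Delta\vdash^{+\phi}\gamma$ then $\Gamma\cup\Delta\vdash\gamma$. *)

theory Defs
  imports Main
begin

(* Formulas: type 'f.  A setting is (deriv, contr, hat) with
   deriv :: 'f set => 'f => bool  (only its restriction to finite premise sets matters),
   contr  = overline,  hat = the hat-operator. *)

definition setting :: "('f set \<Rightarrow> 'f \<Rightarrow> bool) \<Rightarrow> ('f \<Rightarrow> 'f set) \<Rightarrow> ('f set \<Rightarrow> 'f set) \<Rightarrow> bool" where
  "setting deriv contr hat \<longleftrightarrow>
     hat {} = {} \<and> (\<forall>\<Gamma>. finite \<Gamma> \<longrightarrow> finite (hat \<Gamma>))"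

(* Transitive closure of  deriv \<union> {(\<emptyset>, \<phi>)}  (restricted to finite premise sets),
   transitivity read as the cut rule:  \<Gamma> \<turnstile> \<psi>,  \<Delta> \<turnstile> \<gamma>,  \<psi> \<in> \<Delta>  give  \<Gamma> \<union> (\<Delta> - {\<psi>}) \<turnstile> \<gamma>. *)
inductive deriv_plus :: "('f set \<Rightarrow> 'f \<Rightarrow> bool) \<Rightarrow> 'f \<Rightarrow> 'f set \<Rightarrow> 'f \<Rightarrow> bool"
  for deriv :: "'f set \<Rightarrow> 'f \<Rightarrow> bool" and \<phi> :: 'f where
  base: "finite \<Gamma> \<Longrightarrow> deriv \<Gamma> \<gamma> \<Longrightarrow> deriv_plus deriv \<phi> \<Gamma> \<gamma>"
| ax: "deriv_plus deriv \<phi> {} \<phi>"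
| trans: "deriv_plus deriv \<phi> \<Gamma> \<psi> \<Longrightarrow> deriv_plus deriv \<phi> \<Delta> \<gamma> \<Longrightarrow> \<psi> \<in> \<Delta> \<Longrightarrow>
          deriv_plus deriv \<phi> (\<Gamma> \<union> (\<Delta> - {\<psi>})) \<gamma>"

definition pointed :: "('f set \<Rightarrow> 'f \<Rightarrow> bool) \<Rightarrow> ('f \<Rightarrow> 'f set) \<Rightarrow> ('f set \<Rightarrow> 'f set) \<Rightarrow> bool" where
  "pointed deriv contr hat \<longleftrightarrow>
     setting deriv contr hat \<and>
     (\<forall>\<Gamma> \<Delta>. finite \<Gamma> \<longrightarrow> finite \<Delta> \<longrightarrow> hat (\<Gamma> \<union> \<Delta>) = hat \<Gamma> \<union> hat \<Delta>) \<and>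
     (\<forall>\<phi> \<Gamma> \<Delta> \<gamma>. finite \<Gamma> \<longrightarrow> finite \<Delta> \<longrightarrow> deriv \<Gamma> \<phi> \<longrightarrow> deriv_plus deriv \<phi> \<Delta> \<gamma>
        \<longrightarrow> deriv (\<Gamma> \<union> \<Delta>) \<gamma>)"

definition Arg :: "('f set \<Rightarrow> 'f \<Rightarrow> bool) \<Rightarrow> 'f set \<Rightarrow> ('f set \<times> 'f) set" where
  "Arg deriv S = {(\<Gamma>, \<gamma>). finite \<Gamma> \<and> \<Gamma> \<subseteq> S \<and> deriv \<Gamma> \<gamma>}"

definition attacks :: "('f \<Rightarrow> 'f set) \<Rightarrow> ('f set \<Rightarrow> 'f set) \<Rightarrow> ('f set \<times> 'f) \<Rightarrow> ('f set \<times> 'f) \<Rightarrow> bool" where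
  "attacks contr hat a b \<longleftrightarrow> (\<exists>\<phi> \<in> hat (fst b). snd a \<in> contr \<phi>)"

definition conflict_free :: "('a \<Rightarrow> 'a \<Rightarrow> bool) \<Rightarrow> 'a set \<Rightarrow> bool" where
  "conflict_free Att E \<longleftrightarrow> (\<forall>a\<in>E. \<forall>b\<in>E. \<not> Att a b)"

definition defends :: "'a set \<Rightarrow> ('a \<Rightarrow> 'a \<Rightarrow> bool) \<Rightarrow> 'a set \<Rightarrow> 'a \<Rightarrow> bool" where
  "defends Args Att E a \<longleftrightarrow> (\<forall>b\<in>Args. Att b a \<longrightarrow> (\<exists>c\<in>E. Att c b))"

definition complete_ext :: "'a set \<Rightarrow> ('a \<Rightarrow> 'a \<Rightarrow> bool) \<Rightarrow> 'a set \<Rightarrow> bool" where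
  "complete_ext Args Att E \<longleftrightarrow>
     E \<subseteq> Args \<and> conflict_free Att E \<and> (\<forall>a\<in>E. defends Args Att E a) \<and>
     (\<forall>a\<in>Args. defends Args Att E a \<longrightarrow> a \<in> E)"

definition grounded :: "'a set \<Rightarrow> ('a \<Rightarrow> 'a \<Rightarrow> bool) \<Rightarrow> 'a set" where
  "grounded Args Att = (THE E. complete_ext Args Att E \<and>
      (\<forall>E'. complete_ext Args Att E' \<and> E' \<subseteq> E \<longrightarrow> E' = E))"

definition Grd :: "('f set \<Rightarrow> 'f \<Rightarrow> bool) \<Rightarrow> ('f \<Rightarrow> 'f set) \<Rightarrow> ('f set \<Rightarrow> 'f set) \<Rightarrow> 'f set \<Rightarrow> ('f set \<times> 'f) set" where
  "Grd deriv contr hat S = grounded (Arg deriv S) (attacks contr hat)"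

definition grd_cons :: "('f set \<Rightarrow> 'f \<Rightarrow> bool) \<Rightarrow> ('f \<Rightarrow> 'f set) \<Rightarrow> ('f set \<Rightarrow> 'f set) \<Rightarrow> 'f set \<Rightarrow> 'f \<Rightarrow> bool" where
  "grd_cons deriv contr hat S \<phi> \<longleftrightarrow> (\<exists>\<Gamma>. (\<Gamma>, \<phi>) \<in> Grd deriv contr hat S)"

end

theory Submission
  imports Defs
begin

(* Fix an argument (P, \<phi>) in the grounded extension over \<turnstile>.  By Cut, every
   \<turnstile>\<^sup>+\<^sup>\<phi>-argument (\<Delta>, \<gamma>) turns into the \<turnstile>-argument (P \<union> \<Delta>, \<gamma>).  It has the same
   conclusion, hence attacks the same arguments, and by additivity of the hat
   operator it is attacked exactly by the attackers of (\<Delta>, \<gamma>) and of (P, \<phi>).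
   The attackers of (P, \<phi>) are already defeated by the grounded extension, so
   the absorption of P transports the grounded extension of each framework
   into that of the other. *)

definition characteristic :: "'a set \<Rightarrow> ('a \<Rightarrow> 'a \<Rightarrow> bool) \<Rightarrow> 'a set \<Rightarrow> 'a set" where
  "characteristic Args Att E = {a \<in> Args. defends Args Att E a}"

lemma mono_characteristic: "mono (characteristic Args Att)"
  unfolding mono_def characteristic_def defends_def by blast

lemma complete_ext_iff_fixpoint:
  "complete_ext Args Att E \<longleftrightarrow> conflict_free Att E \<and> characteristic Args Att E = E"
  unfolding complete_ext_def characteristic_def by blast

lemma conflict_free_lfp_characteristic: "conflict_free Att (lfp (characteristic Args Att))"
proof -
  let ?F = "characteristic Args Att"
  let ?G = "lfp ?F"
  have G: "?F ?G = ?G"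
    using lfp_fixpoint[OF mono_characteristic] .
  have G_defends: "a \<in> ?G \<Longrightarrow> a \<in> Args \<and> defends Args Att ?G a" for a
    using G unfolding characteristic_def by blast
  define U where "U = {a \<in> ?G. \<forall>b \<in> ?G. \<not> Att b a \<and> \<not> Att a b}"
  have "?F U \<subseteq> U"
  proof
    fix a assume a: "a \<in> ?F U"
    have "U \<subseteq> ?G" unfolding U_def by blast
    then have a_G: "a \<in> ?G"
      using a monoD[OF mono_characteristic] G by blast
    have a_U: "defends Args Att U a"
      using a unfolding characteristic_def by blast
    have "\<not> Att b a \<and> \<not> Att a b" if b: "b \<in> ?G" for b
    proof (intro conjI notI)
      assume "Att b a"
      then obtain c where "c \<in> U" "Att c b"
        using a_U b G_defends unfolding defends_def by blast
      then show False using b unfolding U_def by blast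
    next
      assume "Att a b"
      then obtain c where c: "c \<in> ?G" "Att c a"
        using a_G b G_defends unfolding defends_def by blast
      then obtain d where "d \<in> U" "Att d c"
        using a_U G_defends unfolding defends_def by blast
      then show False using c unfolding U_def by blast
    qed
    then show "a \<in> U" using a_G unfolding U_def by blast
  qed
  then have "?G \<subseteq> U" by (rule lfp_lowerbound)
  then show ?thesis unfolding U_def conflict_free_def by blast
qed

lemma complete_ext_lfp_characteristic: "complete_ext Args Att (lfp (characteristic Args Att))"
  by (simp add: complete_ext_iff_fixpoint conflict_free_lfp_characteristic
      lfp_fixpoint[OF mono_characteristic])

lemma lfp_characteristic_subset_complete_ext:
  "complete_ext Args Att E \<Longrightarrow> lfp (characteristic Args Att) \<subseteq> E"
  by (simp add: complete_ext_iff_fixpoint lfp_lowerbound)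

lemma grounded_eq_lfp: "grounded Args Att = lfp (characteristic Args Att)"
  unfolding grounded_def
proof (rule the_equality)
  show "complete_ext Args Att (lfp (characteristic Args Att)) \<and>
    (\<forall>E. complete_ext Args Att E \<and> E \<subseteq> lfp (characteristic Args Att) \<longrightarrow>
      E = lfp (characteristic Args Att))"
    using complete_ext_lfp_characteristic lfp_characteristic_subset_complete_ext by blast
next
  fix E
  assume "complete_ext Args Att E \<and> (\<forall>E'. complete_ext Args Att E' \<and> E' \<subseteq> E \<longrightarrow> E' = E)"
  then show "E = lfp (characteristic Args Att)"
    using complete_ext_lfp_characteristic lfp_characteristic_subset_complete_ext by blast
qed

lemma complete_ext_grounded: "complete_ext Args Att (grounded Args Att)"
  unfolding grounded_eq_lfp by (rule complete_ext_lfp_characteristic)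

lemma grounded_subset_Args: "grounded Args Att \<subseteq> Args"
  using complete_ext_grounded[of Args Att] unfolding complete_ext_def by blast

lemma grounded_conflict_free: "a \<in> grounded Args Att \<Longrightarrow> b \<in> grounded Args Att \<Longrightarrow> \<not> Att a b"
  using complete_ext_grounded[of Args Att] unfolding complete_ext_def conflict_free_def by blast

lemma grounded_defends:
  "a \<in> grounded Args Att \<Longrightarrow> b \<in> Args \<Longrightarrow> Att b a \<Longrightarrow> \<exists>c \<in> grounded Args Att. Att c b"
  using complete_ext_grounded[of Args Att] unfolding complete_ext_def defends_def by blast

lemma grounded_if_defended:
  "a \<in> Args \<Longrightarrow> defends Args Att (grounded Args Att) a \<Longrightarrow> a \<in> grounded Args Att"
  using complete_ext_grounded[of Args Att] unfolding complete_ext_def by blast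

lemma grounded_subsetI:
  assumes "\<And>a. a \<in> Args \<Longrightarrow> defends Args Att X a \<Longrightarrow> a \<in> X"
  shows "grounded Args Att \<subseteq> X"
  unfolding grounded_eq_lfp
  by (rule lfp_lowerbound) (use assms in \<open>auto simp: characteristic_def\<close>)

locale grounded_absorption =
  fixes Args Args' :: "'a set" and Att :: "'a \<Rightarrow> 'a \<Rightarrow> bool"
    and p :: 'a and absorb :: "'a \<Rightarrow> 'a"
  assumes Args_subset: "Args \<subseteq> Args'"
    and p_grounded: "p \<in> grounded Args Att"
    and absorb_in_Args: "a \<in> Args' \<Longrightarrow> absorb a \<in> Args"
    and attacks_by_absorb: "a \<in> Args' \<Longrightarrow> Att (absorb a) b \<longleftrightarrow> Att a b"
    and attacks_on_absorb: "a \<in> Args' \<Longrightarrow> Att b (absorb a) \<longleftrightarrow> Att b a \<or> Att b p"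
begin

lemma grounded_subset_grounded': "grounded Args Att \<subseteq> grounded Args' Att"
proof -
  have "grounded Args Att \<subseteq> grounded Args Att \<inter> grounded Args' Att"
  proof (rule grounded_subsetI)
    fix a
    assume a: "a \<in> Args"
      and a_defended: "defends Args Att (grounded Args Att \<inter> grounded Args' Att) a"
    have "defends Args' Att (grounded Args' Att) a"
      unfolding defends_def
    proof (intro ballI impI)
      fix b assume b: "b \<in> Args'" "Att b a"
      have "Att (absorb b) a" using attacks_by_absorb[OF b(1)] b(2) by simp
      then obtain c where c: "c \<in> grounded Args Att" "c \<in> grounded Args' Att" "Att c (absorb b)"
        using a_defended absorb_in_Args[OF b(1)] unfolding defends_def by blast
      have "\<not> Att c p" using grounded_conflict_free[OF c(1) p_grounded] .
      then show "\<exists>c \<in> grounded Args' Att. Att c b"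
        using c(2,3) attacks_on_absorb[OF b(1)] by blast
    qed
    moreover have "defends Args Att (grounded Args Att) a"
      using a_defended unfolding defends_def by blast
    ultimately show "a \<in> grounded Args Att \<inter> grounded Args' Att"
      using a Args_subset grounded_if_defended[of a Args Att] grounded_if_defended[of a Args' Att]
      by blast
  qed
  then show ?thesis by blast
qed

lemma absorb_grounded_subset: "absorb ` grounded Args' Att \<subseteq> grounded Args Att"
proof -
  have "grounded Args' Att \<subseteq> {a \<in> Args'. absorb a \<in> grounded Args Att}"
  proof (rule grounded_subsetI)
    fix a
    assume a: "a \<in> Args'"
      and a_defended: "defends Args' Att {a \<in> Args'. absorb a \<in> grounded Args Att} a"
    have "defends Args Att (grounded Args Att) (absorb a)"
      unfolding defends_def
    proof (intro ballI impI)
      fix b assume b: "b \<in> Args" "Att b (absorb a)"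
      then consider "Att b a" | "Att b p" using attacks_on_absorb[OF a] by blast
      then show "\<exists>c \<in> grounded Args Att. Att c b"
      proof cases
        case 1
        then obtain c where "c \<in> Args'" "absorb c \<in> grounded Args Att" "Att c b"
          using a_defended b Args_subset unfolding defends_def by blast
        then show ?thesis using attacks_by_absorb by blast
      next
        case 2
        then show ?thesis using grounded_defends[OF p_grounded b(1)] by simp
      qed
    qed
    then show "a \<in> {a \<in> Args'. absorb a \<in> grounded Args Att}"
      using a absorb_in_Args[OF a] grounded_if_defended[of "absorb a" Args Att] by blast
  qed
  then show ?thesis by blast
qed

lemma grounded'_Int_subset_grounded: "grounded Args' Att \<inter> Args \<subseteq> grounded Args Att"
proof
  fix a assume a: "a \<in> grounded Args' Att \<inter> Args"
  have "defends Args Att (grounded Args Att) a"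
    unfolding defends_def
  proof (intro ballI impI)
    fix b assume b: "b \<in> Args" "Att b a"
    have "a \<in> Args'" using a Args_subset by blast
    then have "Att b (absorb a)" using attacks_on_absorb b(2) by blast
    moreover have "absorb a \<in> grounded Args Att" using a absorb_grounded_subset by blast
    ultimately show "\<exists>c \<in> grounded Args Att. Att c b"
      using grounded_defends[OF _ b(1)] by blast
  qed
  then show "a \<in> grounded Args Att" using a grounded_if_defended[of a Args Att] by blast
qed

lemma grounded_eq_grounded'_Int: "grounded Args Att = grounded Args' Att \<inter> Args"
  using grounded_subset_grounded' grounded'_Int_subset_grounded grounded_subset_Args[of Args Att]
  by blast

end

lemma Arg_subset_Arg_deriv_plus: "Arg deriv S \<subseteq> Arg (deriv_plus deriv \<phi>) S"
  unfolding Arg_def by (auto intro: deriv_plus.base)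

lemma Arg_union_premises:
  assumes "pointed deriv contr hat"
    and "(P, \<phi>) \<in> Arg deriv S" and "(\<Delta>, \<gamma>) \<in> Arg (deriv_plus deriv \<phi>) S"
  shows "(P \<union> \<Delta>, \<gamma>) \<in> Arg deriv S"
  using assms unfolding pointed_def Arg_def by auto

lemma attacks_union_premises:
  assumes "pointed deriv contr hat" and "finite P" and "finite \<Delta>"
  shows "attacks contr hat b (P \<union> \<Delta>, \<gamma>) \<longleftrightarrow>
    attacks contr hat b (\<Delta>, \<gamma>) \<or> attacks contr hat b (P, \<phi>)"
  using assms unfolding pointed_def attacks_def by auto

lemma grounded_absorption_union_premises:
  assumes pointed: "pointed deriv contr hat"
    and P: "(P, \<phi>) \<in> grounded (Arg deriv S) (attacks contr hat)"
  shows "grounded_absorption (Arg deriv S) (Arg (deriv_plus deriv \<phi>) S)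
    (attacks contr hat) (P, \<phi>) (\<lambda>a. (P \<union> fst a, snd a))"
proof unfold_locales
  have P_Arg: "(P, \<phi>) \<in> Arg deriv S"
    using P grounded_subset_Args[of "Arg deriv S"] by blast
  fix a b assume "a \<in> Arg (deriv_plus deriv \<phi>) S"
  then obtain \<Delta> \<gamma> where a: "a = (\<Delta>, \<gamma>)" "(\<Delta>, \<gamma>) \<in> Arg (deriv_plus deriv \<phi>) S"
    by (cases a) simp
  show "(P \<union> fst a, snd a) \<in> Arg deriv S"
    using Arg_union_premises[OF pointed P_Arg a(2)] a(1) by simp
  have "finite P" "finite \<Delta>"
    using P_Arg a(2) unfolding Arg_def by simp_all
  show "attacks contr hat b (P \<union> fst a, snd a) \<longleftrightarrow>
      attacks contr hat b a \<or> attacks contr hat b (P, \<phi>)"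
    using attacks_union_premises[OF pointed \<open>finite P\<close> \<open>finite \<Delta>\<close>] a(1) by simp
qed (use P Arg_subset_Arg_deriv_plus in \<open>simp_all add: attacks_def\<close>)

theorem theorem2:
  fixes deriv :: "'f set \<Rightarrow> 'f \<Rightarrow> bool" and contr :: "'f \<Rightarrow> 'f set" and hat :: "'f set \<Rightarrow> 'f set"
    and S :: "'f set" and \<phi> \<psi> :: 'f
  assumes "pointed deriv contr hat"
    and "grd_cons deriv contr hat S \<phi>"
  shows "(grd_cons (deriv_plus deriv \<phi>) contr hat S \<psi> \<longleftrightarrow> grd_cons deriv contr hat S \<psi>)
       \<and> Grd deriv contr hat S = Grd (deriv_plus deriv \<phi>) contr hat S \<inter> Arg deriv S"
proof -
  obtain P where P: "(P, \<phi>) \<in> grounded (Arg deriv S) (attacks contr hat)"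
    using assms(2) unfolding grd_cons_def Grd_def by blast
  interpret grounded_absorption "Arg deriv S" "Arg (deriv_plus deriv \<phi>) S"
      "attacks contr hat" "(P, \<phi>)" "\<lambda>a. (P \<union> fst a, snd a)"
    using grounded_absorption_union_premises[OF assms(1) P] .
  have "grd_cons deriv contr hat S \<psi>" if plus: "grd_cons (deriv_plus deriv \<phi>) contr hat S \<psi>"
  proof -
    obtain \<Delta> where "(\<Delta>, \<psi>) \<in> grounded (Arg (deriv_plus deriv \<phi>) S) (attacks contr hat)"
      using plus unfolding grd_cons_def Grd_def by blast
    then have "(P \<union> \<Delta>, \<psi>) \<in> grounded (Arg deriv S) (attacks contr hat)"
      using absorb_grounded_subset by force
    then show ?thesis unfolding grd_cons_def Grd_def by blast
  qed
  moreover have "grd_cons deriv contr hat S \<psi> \<Longrightarrow> grd_cons (deriv_plus deriv \<phi>) contr hat S \<psi>"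
    using grounded_subset_grounded' unfolding grd_cons_def Grd_def by blast
  ultimately show ?thesis
    unfolding Grd_def using grounded_eq_grounded'_Int by blast
qed

end
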